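(* Let $n\ge1$, $p<0$, let $\mathcal{S}$ be a discrete subgroup of $O(n+1)$ satisfying the spanning property, and let $f$ be a positive $\mathcal{S}$-invariant function on $\mathbb{S}^n$ with $c_1\le f\le c_2$. There is a constant $C_n(\mathcal{S})>0$ depending only on $n$ and $\mathcal{S}$ such that for every $\Omega\in\mathcal{K}_p(\mathcal{S})$, $$h_\Omega(x)\le C_n(\mathcal{S})\qquad\forall x\in\mathbb{S}^n.$$
   Context: $\mathcal{K}_p(\mathcal{S})=\{\Omega\in\mathcal{K}_0(\mathcal{S}):\int_{\mathbb{S}^n}fh_\Omega^p=\int_{\mathbb{S}^n}f\}$, where $\mathcal{K}_0(\mathcal{S})$ is the set of convex bodies in $\mathbb{R}^{n+1}$ containing the origin and invariant under all $\phi\in\mathcal{S}$, and $h_\Omega$ is the support function. Spanning property: for every $a\in\mathbb{S}^n$, $\mathrm{conv}\{\phi(a):\phi\in\mathcal{S}\}$ is a non-degenerate $(n+1)$-dimensional polytope. *)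

theory Defs
  imports "HOL-Analysis.Analysis"
begin

text \<open>Ambient space R^(n+1) is real^'n with CARD('n) = n+1; orthogonal maps are
  orthogonal matrices acting by matrix-vector multiplication.\<close>

definition discrete_subgroup_O :: "(real^'n^'n) set \<Rightarrow> bool" where
  "discrete_subgroup_O S \<longleftrightarrow>
     (\<forall>A\<in>S. orthogonal_matrix A) \<and>
     mat 1 \<in> S \<and>
     (\<forall>A\<in>S. \<forall>B\<in>S. A ** B \<in> S) \<and>
     (\<forall>A\<in>S. matrix_inv A \<in> S) \<and>
     (\<forall>A\<in>S. \<exists>e>0. \<forall>B\<in>S. dist B A < e \<longrightarrow> B = A)"

definition spanning_property :: "(real^'n^'n) set \<Rightarrow> bool" where
  "spanning_property S \<longleftrightarrow>
     (\<forall>a\<in>sphere (0::real^'n) 1.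
        polytope (convex hull ((\<lambda>\<phi>. \<phi> *v a) ` S)) \<and>
        aff_dim (convex hull ((\<lambda>\<phi>. \<phi> *v a) ` S)) = int CARD('n))"

definition convex_body :: "'a::euclidean_space set \<Rightarrow> bool" where
  "convex_body K \<longleftrightarrow> compact K \<and> convex K \<and> interior K \<noteq> {}"

definition support_fun :: "'a::euclidean_space set \<Rightarrow> 'a \<Rightarrow> real" where
  "support_fun K x = (SUP y\<in>K. x \<bullet> y)"

definition K0 :: "(real^'n^'n) set \<Rightarrow> (real^'n) set set" where
  "K0 S = {\<Omega>. convex_body \<Omega> \<and> 0 \<in> \<Omega> \<and> (\<forall>\<phi>\<in>S. (\<lambda>x. \<phi> *v x) ` \<Omega> = \<Omega>)}"

text \<open>A measure on the unit sphere proportional to its surface measure (cone measure: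
  push-forward of Lebesgue measure on the punctured unit ball under radial projection).
  The defining equation of K_p is homogeneous in the measure, so the constant is irrelevant.\<close>
definition sphere_measure :: "('a::euclidean_space) measure" where
  "sphere_measure = distr (restrict_space lborel (ball 0 1 - {0}))
                          (restrict_space borel (sphere 0 1)) (\<lambda>x. x /\<^sub>R norm x)"

text \<open>h^p for p<0, with the convention 0^p = \<infinity>.\<close>
definition pow_neg :: "real \<Rightarrow> real \<Rightarrow> ennreal" where
  "pow_neg p t = (if t = 0 then \<infinity> else ennreal (t powr p))"

definition Kp :: "(real^'n^'n) set \<Rightarrow> (real^'n \<Rightarrow> real) \<Rightarrow> real \<Rightarrow> (real^'n) set set" where
  "Kp S f p = {\<Omega>\<in>K0 S.
     (\<integral>\<^sup>+ x. ennreal (f x) * pow_neg p (support_fun \<Omega> x) \<partial>sphere_measure)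
       = (\<integral>\<^sup>+ x. ennreal (f x) \<partial>sphere_measure)}"

end

theory Submission
  imports Defs
begin

(* The orbit S a of a unit vector a lies on the unit sphere, so every orbit point is an extreme
   point of the polytope conv(S a); hence the orbit is finite. Its sum is fixed by S, and a nonzero
   fixed vector would have a one-point orbit, so the sum is 0; as the orbit spans R^(n+1), every
   unit vector x then has positive inner product with some orbit point, and by compactness of the
   sphere this inner product can be bounded below by a uniform r > 0.
   If an S-invariant body contains a point y, it contains the whole orbit of y, so h_\<Omega> \<ge> r |y|
   on the whole sphere. For \<Omega> in K_p(S) with p < 0 this forces r |y| \<le> 1: otherwise
   h_\<Omega>^p \<le> (r |y|)^p < 1 uniformly and the integral of f h_\<Omega>^p would be strictly smaller
   than that of f. Thus \<Omega> lies in the ball of radius 1/r and h_\<Omega> \<le> 1/r. *)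

lemma orthogonal_matrix_transformation:
  fixes A :: "real^'n^'n"
  assumes "orthogonal_matrix A"
  shows "orthogonal_transformation (\<lambda>x. A *v x)"
  using assms by (simp add: orthogonal_transformation_matrix matrix_vector_mul_linear)

lemma inj_orthogonal_matrix:
  fixes A :: "real^'n^'n"
  assumes "orthogonal_matrix A"
  shows "inj (\<lambda>x. A *v x)"
  using orthogonal_transformation_inj[OF orthogonal_matrix_transformation[OF assms]] .

lemma orthogonal_matrix_norm:
  fixes A :: "real^'n^'n"
  assumes "orthogonal_matrix A"
  shows "norm (A *v x) = norm x"
  using orthogonal_transformation_norm[OF orthogonal_matrix_transformation[OF assms]] .

lemma polytope_hull_subset_sphere_imp_finite:
  fixes A :: "'a::euclidean_space set"
  assumes "A \<subseteq> sphere 0 1" and "polytope (convex hull A)"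
  shows "finite A"
proof -
  have hull_in_cball: "convex hull A \<subseteq> cball 0 1"
    using assms(1) by (intro hull_minimal) auto
  have "y extreme_point_of (convex hull A)" if "y \<in> A" for y
  proof -
    have "y \<notin> open_segment u v" if "u \<in> convex hull A" "v \<in> convex hull A" for u v
      using dist_decreases_open_segment[of y u v 0] hull_in_cball that \<open>y \<in> A\<close> assms(1)
      by (fastforce simp: subset_iff)
    then show ?thesis
      using that by (simp add: extreme_point_of_def hull_inc)
  qed
  then have "A \<subseteq> {y. y extreme_point_of (convex hull A)}"
    by blast
  then show ?thesis
    using finite_polyhedron_extreme_points[OF polytope_imp_polyhedron[OF assms(2)]]
    by (rule finite_subset)
qed

lemma exists_inner_pos_if_sum_eq_0:
  fixes A :: "'a::euclidean_space set"
  assumes "finite A" and "\<Sum>A = 0" and "aff_dim A = DIM('a)" and "x \<noteq> 0"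
  shows "\<exists>y\<in>A. 0 < x \<bullet> y"
proof (rule ccontr)
  assume "\<not> ?thesis"
  then have nonpos: "\<forall>y\<in>A. x \<bullet> y \<le> 0"
    by (simp add: not_less)
  have "(\<Sum>y\<in>A. - (x \<bullet> y)) = 0"
    using assms(2) by (simp add: sum_negf inner_sum_right[symmetric])
  then have "\<forall>y\<in>A. - (x \<bullet> y) = 0"
    using sum_nonneg_eq_0_iff[OF assms(1), of "\<lambda>y. - (x \<bullet> y)"] nonpos by simp
  then have "A \<subseteq> {y. x \<bullet> y = 0}"
    by auto
  then have "aff_dim A \<le> aff_dim {y. x \<bullet> y = 0}"
    by (rule aff_dim_subset)
  then have "aff_dim A \<le> DIM('a) - 1"
    using assms(4) by simp
  then show False
    using assms(3) by simp
qed

lemma compact_uniformly_positive: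
  fixes g :: "'i \<Rightarrow> 'a::topological_space \<Rightarrow> real"
  assumes "compact K" and "\<And>i. i \<in> I \<Longrightarrow> continuous_on UNIV (g i)"
    and "\<And>k. k \<in> K \<Longrightarrow> \<exists>i\<in>I. 0 < g i k"
  shows "\<exists>r>0. \<forall>k\<in>K. \<exists>i\<in>I. r \<le> g i k"
proof -
  define U where "U = (\<lambda>(i, e). {k. e < g i k})"
  have "open (U c)" if "c \<in> I \<times> {0<..}" for c
    using that assms(2) by (auto simp: U_def intro!: open_Collect_less)
  moreover have "K \<subseteq> (\<Union>c\<in>I \<times> {0<..}. U c)"
  proof
    fix k assume "k \<in> K"
    then obtain i where "i \<in> I" "0 < g i k"
      using assms(3) by blast
    then show "k \<in> (\<Union>c\<in>I \<times> {0<..}. U c)"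
      by (intro UN_I[of "(i, g i k / 2)"]) (auto simp: U_def)
  qed
  ultimately obtain C where C: "C \<subseteq> I \<times> {0<..}" "finite C" "K \<subseteq> (\<Union>c\<in>C. U c)"
    using compactE_image[OF assms(1)] by metis
  \<comment> \<open>inserting 1 keeps the minimum meaningful when \<open>C\<close> is empty\<close>
  define r where "r = Min (insert 1 (snd ` C))"
  have "0 < r"
    using C by (auto simp: r_def)
  moreover have "\<exists>i\<in>I. r \<le> g i k" if "k \<in> K" for k
  proof -
    obtain i e where "(i, e) \<in> C" "e < g i k"
      using C(3) \<open>k \<in> K\<close> by (auto simp: U_def)
    moreover have "r \<le> e"
      using C(2) \<open>(i, e) \<in> C\<close> unfolding r_def by (intro Min_le) force+
    ultimately show ?thesis
      using C(1) by force
  qed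
  ultimately show ?thesis
    by blast
qed

definition matrix_orbit :: "(real^'n^'n) set \<Rightarrow> real^'n \<Rightarrow> (real^'n) set" where
  "matrix_orbit S a = (\<lambda>\<phi>. \<phi> *v a) ` S"

lemma spanning_property_matrix_orbit:
  fixes S :: "(real^'n^'n) set"
  assumes "spanning_property S" and "a \<in> sphere 0 1"
  shows "polytope (convex hull (matrix_orbit S a))"
    and "aff_dim (matrix_orbit S a) = CARD('n)"
  using assms unfolding spanning_property_def matrix_orbit_def by (metis aff_dim_convex_hull)+

lemma discrete_subgroup_O_orthogonal:
  "discrete_subgroup_O S \<Longrightarrow> \<phi> \<in> S \<Longrightarrow> orthogonal_matrix \<phi>"
  by (simp add: discrete_subgroup_O_def)

lemma matrix_orbit_subset_sphere:
  fixes S :: "(real^'n^'n) set"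
  assumes "discrete_subgroup_O S" and "a \<in> sphere 0 1"
  shows "matrix_orbit S a \<subseteq> sphere 0 1"
  using discrete_subgroup_O_orthogonal[OF assms(1)] assms(2)
  by (auto simp: matrix_orbit_def orthogonal_matrix_norm)

lemma finite_matrix_orbit:
  fixes S :: "(real^'n^'n) set"
  assumes "discrete_subgroup_O S" and "spanning_property S" and "a \<in> sphere 0 1"
  shows "finite (matrix_orbit S a)"
  using matrix_orbit_subset_sphere[OF assms(1,3)] spanning_property_matrix_orbit(1)[OF assms(2,3)]
  by (rule polytope_hull_subset_sphere_imp_finite)

lemma matrix_orbit_image:
  fixes S :: "(real^'n^'n) set"
  assumes S: "discrete_subgroup_O S" "spanning_property S"
    and "a \<in> sphere 0 1" and "\<psi> \<in> S"
  shows "(\<lambda>y. \<psi> *v y) ` matrix_orbit S a = matrix_orbit S a"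
proof (rule endo_inj_surj)
  show "finite (matrix_orbit S a)"
    using finite_matrix_orbit assms by blast
  show "(\<lambda>y. \<psi> *v y) ` matrix_orbit S a \<subseteq> matrix_orbit S a"
    using assms by (auto simp: matrix_orbit_def discrete_subgroup_O_def matrix_vector_mul_assoc)
  show "inj_on (\<lambda>y. \<psi> *v y) (matrix_orbit S a)"
    using inj_orthogonal_matrix[OF discrete_subgroup_O_orthogonal[OF S(1) \<open>\<psi> \<in> S\<close>]]
    by (rule inj_on_subset) simp
qed

lemma matrix_orbit_sum_fixed:
  fixes S :: "(real^'n^'n) set"
  assumes "discrete_subgroup_O S" and "spanning_property S"
    and "a \<in> sphere 0 1" and "\<psi> \<in> S"
  shows "\<psi> *v \<Sum>(matrix_orbit S a) = \<Sum>(matrix_orbit S a)"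
proof -
  let ?A = "matrix_orbit S a"
  have inj: "inj_on (\<lambda>y. \<psi> *v y) ?A"
    using inj_orthogonal_matrix[OF discrete_subgroup_O_orthogonal[OF assms(1,4)]]
    by (rule inj_on_subset) simp
  have "\<psi> *v \<Sum>?A = (\<Sum>y\<in>?A. \<psi> *v y)"
    by (simp add: linear_sum[OF matrix_vector_mul_linear] o_def)
  also have "\<dots> = \<Sum>((\<lambda>y. \<psi> *v y) ` ?A)"
    by (simp add: sum.reindex[OF inj])
  finally show ?thesis
    by (simp add: matrix_orbit_image[OF assms])
qed

lemma matrix_orbit_sum_eq_0:
  fixes S :: "(real^'n^'n) set"
  assumes S: "discrete_subgroup_O S" "spanning_property S" and "a \<in> sphere 0 1"
  shows "\<Sum>(matrix_orbit S a) = 0"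
proof (rule ccontr)
  define v where "v = \<Sum>(matrix_orbit S a)"
  assume "v \<noteq> 0"
  define b where "b = v /\<^sub>R norm v"
  have "b \<in> sphere 0 1"
    using \<open>v \<noteq> 0\<close> by (simp add: b_def)
  have "\<phi> *v b = b" if "\<phi> \<in> S" for \<phi>
    using matrix_orbit_sum_fixed[OF S \<open>a \<in> sphere 0 1\<close> that]
    by (simp add: b_def v_def matrix_vector_mult_scaleR)
  moreover have "mat 1 \<in> S"
    using S by (simp add: discrete_subgroup_O_def)
  ultimately have "(\<lambda>\<phi>. \<phi> *v b) ` S = {b}"
    by force
  then show False
    using spanning_property_matrix_orbit(2)[OF S(2) \<open>b \<in> sphere 0 1\<close>]
    by (simp add: matrix_orbit_def)
qed

lemma matrix_orbit_inner_pos: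
  fixes S :: "(real^'n^'n) set"
  assumes S: "discrete_subgroup_O S" "spanning_property S"
    and "a \<in> sphere 0 1" and "x \<in> sphere 0 1"
  shows "\<exists>\<phi>\<in>S. 0 < x \<bullet> (\<phi> *v a)"
proof -
  have "aff_dim (matrix_orbit S a) = DIM(real^'n)"
    using spanning_property_matrix_orbit(2)[OF S(2) \<open>a \<in> sphere 0 1\<close>] by simp
  moreover have "x \<noteq> 0"
    using \<open>x \<in> sphere 0 1\<close> by auto
  ultimately have "\<exists>y\<in>matrix_orbit S a. 0 < x \<bullet> y"
    using exists_inner_pos_if_sum_eq_0[OF finite_matrix_orbit[OF assms(1-3)]
        matrix_orbit_sum_eq_0[OF assms(1-3)]] by blast
  then show ?thesis
    by (auto simp: matrix_orbit_def)
qed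

lemma continuous_on_inner_matrix_vector:
  fixes A :: "real^'m^'n"
  shows "continuous_on UNIV (\<lambda>(a, x). x \<bullet> (A *v a))"
proof -
  have "continuous_on UNIV (\<lambda>p. A *v fst p)"
    using matrix_vector_mul_bounded_linear continuous_on_fst[OF continuous_on_id]
    by (rule bounded_linear.continuous_on)
  then show ?thesis
    unfolding case_prod_beta by (intro continuous_intros)
qed
lemma matrix_orbit_inner_uniformly_pos:
  fixes S :: "(real^'n^'n) set"
  assumes "discrete_subgroup_O S" and "spanning_property S"
  shows "\<exists>r>0. \<forall>a\<in>sphere 0 1. \<forall>x\<in>sphere 0 1. \<exists>\<phi>\<in>S. r \<le> x \<bullet> (\<phi> *v a)"
proof -
  let ?g = "\<lambda>(\<phi>::real^'n^'n) (a, x). x \<bullet> (\<phi> *v a)"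
  have "\<exists>r>0. \<forall>k\<in>sphere 0 1 \<times> sphere 0 1. \<exists>\<phi>\<in>S. r \<le> ?g \<phi> k"
  proof (rule compact_uniformly_positive)
    show "compact (sphere (0::real^'n) 1 \<times> sphere (0::real^'n) 1)"
      by (intro compact_Times compact_sphere)
    show "continuous_on UNIV (?g \<phi>)" for \<phi>
      by (rule continuous_on_inner_matrix_vector)
    show "\<exists>\<phi>\<in>S. 0 < ?g \<phi> k" if "k \<in> sphere 0 1 \<times> sphere 0 1" for k
      using that matrix_orbit_inner_pos[OF assms] by (cases k) simp
  qed
  then obtain r where "r > 0" and r: "\<forall>k\<in>sphere 0 1 \<times> sphere 0 1. \<exists>\<phi>\<in>S. r \<le> ?g \<phi> k"
    by blast
  have "\<exists>\<phi>\<in>S. r \<le> x \<bullet> (\<phi> *v a)" if "a \<in> sphere 0 1" and "x \<in> sphere 0 1" for a x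
    using r[rule_format, of "(a, x)"] that by simp
  then show ?thesis
    using \<open>r > 0\<close> by blast
qed

lemma support_fun_ge:
  fixes K :: "'a::euclidean_space set"
  assumes "bounded K" and "y \<in> K"
  shows "x \<bullet> y \<le> support_fun K x"
proof -
  have "bounded ((\<lambda>y. x \<bullet> y) ` K)"
    using assms(1) by (intro bounded_linear_image) (simp_all add: bounded_linear_inner_right)
  then show ?thesis
    unfolding support_fun_def using assms(2) by (intro cSUP_upper bounded_imp_bdd_above)
qed

lemma support_fun_le_if_subset_cball:
  fixes K :: "'a::euclidean_space set"
  assumes "K \<noteq> {}" and "K \<subseteq> cball 0 R" and "norm x = 1"
  shows "support_fun K x \<le> R"
  unfolding support_fun_def
proof (rule cSUP_least[OF assms(1)])
  fix y assume "y \<in> K"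
  then show "x \<bullet> y \<le> R"
    using norm_cauchy_schwarz[of x y] assms(2,3) by auto
qed

lemma support_fun_invariant_ge:
  fixes S :: "(real^'n^'n) set"
  assumes "bounded \<Omega>" and "\<forall>\<phi>\<in>S. (\<lambda>x. \<phi> *v x) ` \<Omega> = \<Omega>" and "y \<in> \<Omega>"
    and r: "\<forall>a\<in>sphere 0 1. \<forall>x\<in>sphere 0 1. \<exists>\<phi>\<in>S. r \<le> x \<bullet> (\<phi> *v a)"
    and "z \<in> sphere 0 1"
  shows "r * norm y \<le> support_fun \<Omega> z"
proof (cases "y = 0")
  case True
  then show ?thesis
    using support_fun_ge[OF assms(1,3), of z] by simp
next
  case False
  then have "y /\<^sub>R norm y \<in> sphere 0 1"
    by simp
  then obtain \<phi> where "\<phi> \<in> S" and \<phi>: "r \<le> z \<bullet> (\<phi> *v (y /\<^sub>R norm y))"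
    using r \<open>z \<in> sphere 0 1\<close> by blast
  then have "r \<le> z \<bullet> (\<phi> *v y) / norm y"
    by (simp add: matrix_vector_mult_scaleR divide_inverse_commute)
  then have "r * norm y \<le> z \<bullet> (\<phi> *v y)"
    using False by (simp add: pos_le_divide_eq)
  also have "\<dots> \<le> support_fun \<Omega> z"
    using assms(1-3) \<open>\<phi> \<in> S\<close> by (intro support_fun_ge) auto
  finally show ?thesis .
qed

lemma space_sphere_measure [simp]: "space sphere_measure = sphere 0 1"
  by (simp add: sphere_measure_def space_restrict_space)

lemma sets_sphere_measure [measurable_cong]:
  "sets sphere_measure = sets (restrict_space borel (sphere 0 1))"
  by (simp add: sphere_measure_def)

lemma emeasure_sphere_measure:
  "emeasure sphere_measure (sphere (0::'a::euclidean_space) 1) = emeasure lborel (ball (0::'a) 1)"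
proof -
  let ?B = "ball (0::'a) 1 - {0}"
  have "(\<lambda>x. x /\<^sub>R norm x) \<in> restrict_space lborel ?B \<rightarrow>\<^sub>M borel"
    by (rule measurable_restrict_space1) simp
  then have "(\<lambda>x. x /\<^sub>R norm x) \<in> restrict_space lborel ?B \<rightarrow>\<^sub>M restrict_space borel (sphere 0 1)"
    by (rule measurable_restrict_space2[rotated]) (auto simp: space_restrict_space)
  then have "emeasure sphere_measure (sphere (0::'a) 1)
      = emeasure (restrict_space lborel ?B) ((\<lambda>x. x /\<^sub>R norm x) -` sphere 0 1 \<inter> space (restrict_space lborel ?B))"
    unfolding sphere_measure_def by (rule emeasure_distr) (simp add: sets_restrict_space_iff)
  also have "(\<lambda>x. x /\<^sub>R norm x) -` sphere 0 1 \<inter> space (restrict_space lborel ?B) = ?B"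
    by (auto simp: space_restrict_space)
  also have "emeasure (restrict_space lborel ?B) ?B = emeasure lborel ?B"
    by (rule emeasure_restrict_space) auto
  also have "\<dots> = emeasure lborel (ball (0::'a) 1)"
    by (rule emeasure_Diff_null_set) auto
  finally show ?thesis .
qed

lemma nn_integral_sphere_measure_pos_finite:
  fixes f :: "'a::euclidean_space \<Rightarrow> real"
  assumes "0 < c1" and "\<forall>x\<in>sphere 0 1. c1 \<le> f x \<and> f x \<le> c2"
  shows "0 < (\<integral>\<^sup>+x. ennreal (f x) \<partial>sphere_measure)"
    and "(\<integral>\<^sup>+x. ennreal (f x) \<partial>sphere_measure) < \<infinity>"
proof -
  let ?m = "emeasure sphere_measure (sphere (0::'a) 1)"
  have m_finite: "?m < \<infinity>"
    unfolding emeasure_sphere_measure by (rule emeasure_lborel_ball_finite)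
  then have m_pos: "0 < ?m"
    by (simp add: emeasure_sphere_measure emeasure_eq_ennreal_measure)
  have "0 < ennreal c1 * ?m"
    using assms(1) m_pos by (simp add: ennreal_zero_less_mult_iff)
  also have "\<dots> \<le> (\<integral>\<^sup>+x. ennreal (f x) \<partial>sphere_measure)"
    using nn_integral_mono[of sphere_measure "\<lambda>_. ennreal c1" "\<lambda>x. ennreal (f x)"] assms(2)
    by (simp add: ennreal_leI)
  finally show "0 < (\<integral>\<^sup>+x. ennreal (f x) \<partial>sphere_measure)" .
  have "(\<integral>\<^sup>+x. ennreal (f x) \<partial>sphere_measure) \<le> ennreal c2 * ?m"
    using nn_integral_mono[of sphere_measure "\<lambda>x. ennreal (f x)" "\<lambda>_. ennreal c2"] assms(2)
    by (simp add: ennreal_leI)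
  also have "\<dots> < \<infinity>"
    using m_finite by (simp add: ennreal_mult_less_top)
  finally show "(\<integral>\<^sup>+x. ennreal (f x) \<partial>sphere_measure) < \<infinity>" .
qed

lemma nn_integral_mult_bounded_less:
  fixes f g :: "'a \<Rightarrow> ennreal"
  assumes "f \<in> borel_measurable M"
    and "0 < integral\<^sup>N M f" and "integral\<^sup>N M f < \<infinity>"
    and "\<And>x. x \<in> space M \<Longrightarrow> g x \<le> ennreal q" and "q < 1"
  shows "(\<integral>\<^sup>+x. f x * g x \<partial>M) < integral\<^sup>N M f"
proof -
  have "(\<integral>\<^sup>+x. f x * g x \<partial>M) \<le> (\<integral>\<^sup>+x. f x * ennreal q \<partial>M)"
    using assms(4) by (intro nn_integral_mono) (simp add: mult_left_mono)
  also have "\<dots> = integral\<^sup>N M f * ennreal q"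
    using assms(1) by (rule nn_integral_multc)
  also have "\<dots> < integral\<^sup>N M f * 1"
    using assms(2,3,5) by (intro ennreal_mult_strict_left_mono) simp_all
  finally show ?thesis
    by simp
qed

lemma Kp_support_fun_less_somewhere:
  fixes S :: "(real^'n^'n) set"
  assumes "p < 0" and "0 < c1" and "f \<in> borel_measurable (restrict_space borel (sphere 0 1))"
    and "\<forall>x\<in>sphere 0 1. c1 \<le> f x \<and> f x \<le> c2"
    and "\<Omega> \<in> Kp S f p" and "1 < t"
  shows "\<exists>z\<in>sphere 0 1. support_fun \<Omega> z < t"
proof (rule ccontr)
  assume "\<not> ?thesis"
  then have ge: "t \<le> support_fun \<Omega> z" if "z \<in> sphere 0 1" for z
    using that by (simp add: not_less)
  have "pow_neg p (support_fun \<Omega> z) \<le> ennreal (t powr p)" if "z \<in> sphere 0 1" for z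
    using ge[OF that] \<open>1 < t\<close> \<open>p < 0\<close>
    by (auto simp: pow_neg_def intro!: ennreal_leI powr_mono2')
  moreover have "(\<lambda>x. ennreal (f x)) \<in> borel_measurable sphere_measure"
    using assms(3) by measurable
  ultimately have "(\<integral>\<^sup>+x. ennreal (f x) * pow_neg p (support_fun \<Omega> x) \<partial>sphere_measure)
      < (\<integral>\<^sup>+x. ennreal (f x) \<partial>sphere_measure)"
    using nn_integral_sphere_measure_pos_finite[OF assms(2,4)] powr_less_one[OF \<open>1 < t\<close> \<open>p < 0\<close>]
    by (intro nn_integral_mult_bounded_less) auto
  then show False
    using \<open>\<Omega> \<in> Kp S f p\<close> by (simp add: Kp_def)
qed

lemma Kp_subset_cball:
  fixes S :: "(real^'n^'n) set"
  assumes "0 < r" and r: "\<forall>a\<in>sphere 0 1. \<forall>x\<in>sphere 0 1. \<exists>\<phi>\<in>S. r \<le> x \<bullet> (\<phi> *v a)"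
    and "p < 0" and "0 < c1" and "f \<in> borel_measurable (restrict_space borel (sphere 0 1))"
    and "\<forall>x\<in>sphere 0 1. c1 \<le> f x \<and> f x \<le> c2"
    and \<Omega>: "\<Omega> \<in> Kp S f p"
  shows "\<Omega> \<subseteq> cball 0 (1 / r)"
proof
  fix y assume "y \<in> \<Omega>"
  have "bounded \<Omega>" and inv: "\<forall>\<phi>\<in>S. (\<lambda>x. \<phi> *v x) ` \<Omega> = \<Omega>"
    using \<Omega> by (auto simp: Kp_def K0_def convex_body_def compact_imp_bounded)
  show "y \<in> cball 0 (1 / r)"
  proof (rule ccontr)
    assume "y \<notin> cball 0 (1 / r)"
    then have "1 < r * norm y"
      using \<open>0 < r\<close> by (simp add: field_simps)
    then obtain z where "z \<in> sphere 0 1" and "support_fun \<Omega> z < r * norm y"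
      using Kp_support_fun_less_somewhere[OF assms(3-7)] by blast
    then show False
      using support_fun_invariant_ge[OF \<open>bounded \<Omega>\<close> inv \<open>y \<in> \<Omega>\<close> r] by fastforce
  qed
qed

theorem lemma3p2:
  fixes S :: "(real^'n^'n) set"
  assumes "CARD('n) \<ge> 2"
    and "discrete_subgroup_O S"
    and "spanning_property S"
  shows "\<exists>C>0. \<forall>(p::real) (f::real^'n \<Rightarrow> real) (c1::real) (c2::real) \<Omega>.
           p < 0 \<longrightarrow> 0 < c1 \<longrightarrow>
           f \<in> borel_measurable (restrict_space borel (sphere 0 1)) \<longrightarrow>
           (\<forall>x\<in>sphere 0 1. 0 < f x \<and> c1 \<le> f x \<and> f x \<le> c2) \<longrightarrow>
           (\<forall>\<phi>\<in>S. \<forall>x\<in>sphere 0 1. f (\<phi> *v x) = f x) \<longrightarrow>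
           \<Omega> \<in> Kp S f p \<longrightarrow>
           (\<forall>x\<in>sphere 0 1. support_fun \<Omega> x \<le> C)"
proof -
  obtain r where "0 < r" and r: "\<forall>a\<in>sphere 0 1. \<forall>x\<in>sphere 0 1. \<exists>\<phi>\<in>S. r \<le> x \<bullet> (\<phi> *v a)"
    using matrix_orbit_inner_uniformly_pos[OF assms(2,3)] by blast
  have "support_fun \<Omega> x \<le> 1 / r"
    if "p < 0" and "0 < c1" and "f \<in> borel_measurable (restrict_space borel (sphere 0 1))"
      and "\<forall>x\<in>sphere 0 1. 0 < f x \<and> c1 \<le> f x \<and> f x \<le> c2"
      and "\<Omega> \<in> Kp S f p" and "x \<in> sphere 0 1"
    for p f c1 c2 \<Omega> x
  proof (rule support_fun_le_if_subset_cball)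
    show "\<Omega> \<noteq> {}"
      using \<open>\<Omega> \<in> Kp S f p\<close> by (auto simp: Kp_def K0_def)
    have "\<forall>x\<in>sphere 0 1. c1 \<le> f x \<and> f x \<le> c2"
      using that(4) by simp
    then show "\<Omega> \<subseteq> cball 0 (1 / r)"
      by (rule Kp_subset_cball[OF \<open>0 < r\<close> r that(1-3) _ that(5)])
    show "norm x = 1"
      using \<open>x \<in> sphere 0 1\<close> by simp
  qed
  then show ?thesis
    using \<open>0 < r\<close> by (intro exI[of _ "1 / r"]) auto
qed

end
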